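(* Every direct summand of a semi-generalized Bassian group is semi-generalized Bassian.
   Context: All groups are additively written abelian groups. A subgroup $H$ of a group $A$ is essential in $A$ if $H \cap S \neq \{0\}$ for every non-zero subgroup $S$ of $A$. A group $G$ is semi-generalized Bassian if, for every subgroup $H \le G$, the existence of an injective homomorphism $G \to G/H$ implies that $H$ is an essential subgroup of some direct summand of $G$. *)

theory Defs
  imports "HOL-Algebra.Algebra"
begin

text \<open>Abelian groups are modelled as HOL-Algebra commutative groups (the group
operation is written multiplicatively by the library; the identity plays the role of 0).\<close>

definition essential_in :: "'a set \<Rightarrow> 'a set \<Rightarrow> ('a, 'b) monoid_scheme \<Rightarrow> bool" where
  "essential_in H A G \<longleftrightarrow> H \<subseteq> A \<and>
     (\<forall>S. subgroup S G \<longrightarrow> S \<subseteq> A \<longrightarrow> S \<noteq> {\<one>\<^bsub>G\<^esub>} \<longrightarrow> H \<inter> S \<noteq> {\<one>\<^bsub>G\<^esub>})"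

definition direct_summand :: "'a set \<Rightarrow> ('a, 'b) monoid_scheme \<Rightarrow> bool" where
  "direct_summand A G \<longleftrightarrow> subgroup A G \<and>
     (\<exists>B. subgroup B G \<and> A \<inter> B = {\<one>\<^bsub>G\<^esub>} \<and> A <#>\<^bsub>G\<^esub> B = carrier G)"

definition semi_generalized_bassian :: "('a, 'b) monoid_scheme \<Rightarrow> bool" where
  "semi_generalized_bassian G \<longleftrightarrow> comm_group G \<and>
     (\<forall>H. subgroup H G \<longrightarrow>
        (\<exists>f. f \<in> hom G (G Mod H) \<and> inj_on f (carrier G)) \<longrightarrow>
        (\<exists>A. direct_summand A G \<and> essential_in H A G))"

end

theory Submission
  imports Defs
begin

(*
  Written additively: let G = A \<oplus> B, let K be a subgroup of A and \<phi> : A \<rightarrow> A/K an embedding.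
  Then a + b \<mapsto> \<phi> a + (K + b) embeds G into G/K, so K is essential in a summand C of
  G = C \<oplus> D. Let p be the projection onto A along B and q the projection onto C along D.
  The endomorphism d = q \<circ> (1 - p) of C kills K; as K is essential in C, every element of C
  is annihilated by some power of d, so 1 - d is an automorphism of C. Since q \<circ> p = 1 - d
  on C, the groups p(C) and A \<inter> D are complementary in A, and K stays essential in p(C)
  because p is the identity on K.
*)

lemma (in comm_group) hom_mult_pointwise:
  assumes "f \<in> hom H G" "g \<in> hom H G"
  shows "(\<lambda>x. f x \<otimes> g x) \<in> hom H G"
  using assms by (intro homI) (auto simp: hom_def Pi_def m_ac)

lemma (in comm_group) hom_inv_pointwise:
  assumes "f \<in> hom H G"
  shows "(\<lambda>x. inv (f x)) \<in> hom H G"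
  using assms by (intro homI) (auto simp: hom_def Pi_def inv_mult)

lemma (in group_hom) subgroup_preimage:
  assumes "subgroup C G" "subgroup S H"
  shows "subgroup {c \<in> C. h c \<in> S} G"
proof (rule G.subgroupI)
  show "{c \<in> C. h c \<in> S} \<subseteq> carrier G"
    using subgroup.subset[OF assms(1)] by blast
  show "{c \<in> C. h c \<in> S} \<noteq> {}"
    using subgroup.one_closed[OF assms(1)] subgroup.one_closed[OF assms(2)] by auto
next
  fix a b assume a: "a \<in> {c \<in> C. h c \<in> S}" and b: "b \<in> {c \<in> C. h c \<in> S}"
  then have carr: "a \<in> carrier G" "b \<in> carrier G"
    using subgroup.mem_carrier[OF assms(1)] by auto
  show "inv a \<in> {c \<in> C. h c \<in> S}"
    using a carr subgroup.m_inv_closed[OF assms(1)] subgroup.m_inv_closed[OF assms(2)] by simp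
  show "a \<otimes> b \<in> {c \<in> C. h c \<in> S}"
    using a b carr subgroup.m_closed[OF assms(1)] subgroup.m_closed[OF assms(2)] by simp
qed

lemma (in group) essential_in_hom_image:
  assumes h: "h \<in> hom G G" and C: "subgroup C G" and K: "subgroup K G"
    and h_fixes: "\<And>k. k \<in> K \<Longrightarrow> h k = k" and ess: "essential_in K C G"
  shows "essential_in K (h ` C) G"
  unfolding essential_in_def
proof (intro conjI allI impI)
  interpret h: group_hom G G h
    using h by (simp add: group_hom_def group_hom_axioms_def is_group)
  have "K \<subseteq> C"
    using ess by (simp add: essential_in_def)
  then show "K \<subseteq> h ` C"
    using h_fixes by (metis image_eqI subsetD subsetI)
  fix S assume S: "subgroup S G" and S_img: "S \<subseteq> h ` C" and S_nontriv: "S \<noteq> {\<one>}"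
  let ?P = "{c \<in> C. h c \<in> S}"
  have P: "subgroup ?P G"
    using h.subgroup_preimage[OF C S] .
  obtain s where s: "s \<in> S" "s \<noteq> \<one>"
    using S_nontriv subgroup.one_closed[OF S] by blast
  then obtain c where "c \<in> ?P" "c \<noteq> \<one>"
    using S_img by fastforce
  then have "?P \<noteq> {\<one>}"
    by blast
  then have "K \<inter> ?P \<noteq> {\<one>}"
    using ess P unfolding essential_in_def by blast
  moreover have "\<one> \<in> K \<inter> ?P"
    using subgroup.one_closed[OF K] subgroup.one_closed[OF P] by blast
  ultimately obtain k where "k \<in> K" "k \<in> ?P" "k \<noteq> \<one>"
    by blast
  moreover have "\<one> \<in> K \<inter> S"
    using subgroup.one_closed[OF K] subgroup.one_closed[OF S] by blast
  ultimately show "K \<inter> S \<noteq> {\<one>}"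
    using h_fixes by force
qed

lemma (in group) subgroup_carrier_update_iff:
  assumes "subgroup A G"
  shows "subgroup S (G\<lparr>carrier := A\<rparr>) \<longleftrightarrow> subgroup S G \<and> S \<subseteq> A"
  using incl_subgroup[OF assms] subgroup_incl[OF _ assms] subgroup.subset[of S "G\<lparr>carrier := A\<rparr>"]
  by auto

lemma (in group) essential_in_carrier_update_iff:
  assumes "subgroup A G" "E \<subseteq> A"
  shows "essential_in K E (G\<lparr>carrier := A\<rparr>) \<longleftrightarrow> essential_in K E G"
  using assms subgroup_carrier_update_iff[OF assms(1)]
  unfolding essential_in_def by simp (meson order_trans)

lemma (in group) direct_summand_carrier_update:
  assumes "subgroup A G" "subgroup E G" "subgroup F G"
    and "E \<inter> F = {\<one>}" "E <#> F = A"
  shows "direct_summand E (G\<lparr>carrier := A\<rparr>)"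
proof -
  have "E \<subseteq> A"
  proof
    fix e assume e: "e \<in> E"
    then have "e \<otimes> \<one> \<in> E <#> F"
      unfolding set_mult_def using subgroup.one_closed[OF assms(3)] by blast
    then show "e \<in> A"
      using assms(5) subgroup.mem_carrier[OF assms(2) e] by simp
  qed
  moreover have "F \<subseteq> A"
  proof
    fix f assume f: "f \<in> F"
    then have "\<one> \<otimes> f \<in> E <#> F"
      unfolding set_mult_def using subgroup.one_closed[OF assms(2)] by blast
    then show "f \<in> A"
      using assms(5) subgroup.mem_carrier[OF assms(3) f] by simp
  qed
  ultimately show ?thesis
    using assms subgroup_carrier_update_iff[OF assms(1)]
    unfolding direct_summand_def set_mult_def by auto
qed

lemma (in comm_group) comm_group_carrier_update:
  assumes "subgroup A G"
  shows "comm_group (G\<lparr>carrier := A\<rparr>)"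
  using group.group_comm_groupI[OF subgroup_imp_group[OF assms]] subgroup.mem_carrier[OF assms]
  by (simp add: m_comm)

lemma (in group) hom_FactGroup_carrier_update:
  assumes "A \<subseteq> carrier G"
  shows "hom H (G\<lparr>carrier := A\<rparr> Mod K) \<subseteq> hom H (G Mod K)"
proof -
  have "carrier (G\<lparr>carrier := A\<rparr> Mod K) \<subseteq> carrier (G Mod K)"
    using assms unfolding FactGroup_def RCOSETS_def r_coset_def by auto
  moreover have "set_mult (G\<lparr>carrier := A\<rparr>) = set_mult G"
    unfolding set_mult_def by simp
  ultimately show ?thesis
    unfolding hom_def by (auto simp: FactGroup_def)
qed

lemma (in group) essential_in_meets_cyclic:
  assumes C: "subgroup C G" and K: "subgroup K G" and ess: "essential_in K C G"
    and y: "y \<in> C" "y \<noteq> \<one>"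
  obtains i :: int where "y [^] i \<in> K" "y [^] i \<noteq> \<one>"
proof -
  have y_carr: "y \<in> carrier G"
    using subgroup.mem_carrier[OF C y(1)] .
  let ?Y = "generate G {y}"
  have "subgroup ?Y G" "?Y \<subseteq> C" "y \<in> ?Y"
    using y_carr generate_is_subgroup generate_subgroup_incl[OF _ C] y(1) generate.incl[of y "{y}"]
    by auto
  then have "K \<inter> ?Y \<noteq> {\<one>}"
    using ess y(2) unfolding essential_in_def by blast
  moreover have "\<one> \<in> K \<inter> ?Y"
    using K \<open>subgroup ?Y G\<close> subgroup.one_closed by blast
  ultimately obtain z where "z \<in> K" "z \<in> ?Y" "z \<noteq> \<one>"
    by blast
  moreover obtain i :: int where "z = y [^] i"
    using \<open>z \<in> ?Y\<close> generate_pow[OF y_carr] by blast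
  ultimately show thesis
    using that by blast
qed

lemma (in group) ord_drop_if_kills_essential:
  assumes d: "d \<in> hom G G" and C: "subgroup C G"
    and K: "subgroup K G" and dK: "\<And>k. k \<in> K \<Longrightarrow> d k = \<one>" and ess: "essential_in K C G"
    and z: "z \<in> C" "z \<noteq> \<one>"
  obtains i :: int where "int (ord (d z)) dvd i" "\<not> int (ord z) dvd i"
proof -
  have z_carr: "z \<in> carrier G"
    using subgroup.mem_carrier[OF C z(1)] .
  obtain i :: int where i: "z [^] i \<in> K" "z [^] i \<noteq> \<one>"
    using essential_in_meets_cyclic[OF C K ess z] .
  have "d z [^] i = \<one>"
    using dK[OF i(1)] hom_int_pow[OF d z_carr is_group is_group] by simp
  then show thesis
    using that i(2) int_pow_eq_id[OF z_carr] int_pow_eq_id[OF hom_in_carrier[OF d z_carr]]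
    by auto
qed

text \<open>Here ord y = 0 encodes infinite order. By the previous lemma, d maps every
  element of C to one of finite order, and it strictly decreases non-zero orders.\<close>

lemma (in group) locally_nilpotent_if_kills_essential:
  assumes d: "d \<in> hom G G" and C: "subgroup C G" and dC: "d ` C \<subseteq> C"
    and K: "subgroup K G" and dK: "\<And>k. k \<in> K \<Longrightarrow> d k = \<one>" and ess: "essential_in K C G"
    and y: "y \<in> C"
  shows "\<exists>n. (d ^^ n) y = \<one>"
proof -
  have carr: "z \<in> carrier G" if "z \<in> C" for z
    using subgroup.mem_carrier[OF C that] .
  have step: "\<exists>n. (d ^^ n) z = \<one>" if "(d ^^ n) (d z) = \<one>" for n z
    by (rule exI[of _ "Suc n"]) (simp add: that funpow_Suc_right del: funpow.simps)
  have torsion: "\<exists>n. (d ^^ n) z = \<one>" if "z \<in> C" "0 < ord z" for z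
    using that
  proof (induction "ord z" arbitrary: z rule: less_induct)
    case less
    show ?case
    proof (cases "z = \<one>")
      case True
      then show ?thesis by (metis funpow_0)
    next
      case False
      obtain i :: int where i: "int (ord (d z)) dvd i" "\<not> int (ord z) dvd i"
        using ord_drop_if_kills_essential[OF d C K dK ess less.prems(1) False] .
      have "d z [^] ord z = \<one>"
        using hom_nat_pow[OF d carr[OF less.prems(1)] is_group is_group, symmetric]
          carr[OF less.prems(1)] hom_one[OF d is_group is_group] by simp
      then have "ord (d z) dvd ord z"
        using pow_eq_id hom_in_carrier[OF d carr[OF less.prems(1)]] by blast
      then have "ord (d z) \<noteq> ord z" "ord (d z) \<le> ord z" "0 < ord (d z)"
        using i less.prems(2) by (auto intro: dvd_imp_le Nat.gr0I)
      moreover have "d z \<in> C"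
        using dC less.prems(1) by blast
      ultimately show ?thesis
        using less.hyps[of "d z"] step by fastforce
    qed
  qed
  show ?thesis
  proof (cases "y = \<one>")
    case True
    then show ?thesis by (metis funpow_0)
  next
    case False
    obtain i :: int where "int (ord (d y)) dvd i" "\<not> int (ord y) dvd i"
      using ord_drop_if_kills_essential[OF d C K dK ess y False] .
    then have "0 < ord (d y)"
      by (auto intro: Nat.gr0I)
    moreover have "d y \<in> C"
      using dC y by blast
    ultimately show ?thesis
      using torsion step by blast
  qed
qed

text \<open>The preimage of y is the finite sum y + d y + d^2 y + ... + d^(n-1) y.\<close>

lemma (in comm_group) one_minus_nilpotent_surj:
  assumes d: "d \<in> hom G G" and C: "subgroup C G" and dC: "d ` C \<subseteq> C"
    and y: "y \<in> C" "(d ^^ n) y = \<one>"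
  shows "\<exists>x\<in>C. y = x \<otimes> inv (d x)"
  using y
proof (induction n arbitrary: y)
  case 0
  then show ?case
    using subgroup.one_closed[OF C] hom_one[OF d is_group is_group]
    by (intro bexI[of _ \<one>]) simp_all
next
  case (Suc n)
  interpret d: group_hom G G d
    using d by (simp add: group_hom_def group_hom_axioms_def is_group)
  have "d y \<in> C"
    using dC Suc.prems(1) by blast
  moreover have "(d ^^ n) (d y) = \<one>"
    using Suc.prems(2) by (simp add: funpow_Suc_right del: funpow.simps)
  ultimately obtain z where z: "z \<in> C" "d y = z \<otimes> inv (d z)"
    using Suc.IH by blast
  have carr: "y \<in> carrier G" "z \<in> carrier G"
    using subgroup.mem_carrier[OF C] Suc.prems(1) z(1) by auto
  then have "(y \<otimes> z) \<otimes> inv (d (y \<otimes> z)) = y"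
    using z(2) by (simp add: m_assoc)
  then show ?case
    using subgroup.m_closed[OF C Suc.prems(1) z(1)] by metis
qed

lemma (in comm_group) bij_betw_one_minus_locally_nilpotent:
  assumes d: "d \<in> hom G G" and C: "subgroup C G" and dC: "d ` C \<subseteq> C"
    and nil: "\<And>y. y \<in> C \<Longrightarrow> \<exists>n. (d ^^ n) y = \<one>"
  shows "bij_betw (\<lambda>c. c \<otimes> inv (d c)) C C"
proof -
  let ?s = "\<lambda>c. c \<otimes> inv (d c)"
  interpret d: group_hom G G d
    using d by (simp add: group_hom_def group_hom_axioms_def is_group)
  have "(\<lambda>c. c) \<in> hom G G"
    by (rule homI) auto
  then have "?s \<in> hom G G"
    using hom_mult_pointwise hom_inv_pointwise[OF d] by blast
  then interpret s: group_hom G G ?s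
    by (simp add: group_hom_def group_hom_axioms_def is_group)
  have carr: "c \<in> carrier G" if "c \<in> C" for c
    using subgroup.mem_carrier[OF C that] .
  have s_closed: "?s c \<in> C" if "c \<in> C" for c
    using that dC C by (blast intro: subgroup.m_closed subgroup.m_inv_closed)
  have s_kernel: "c = \<one>" if "c \<in> C" "?s c = \<one>" for c
  proof -
    have "d c = c"
      using that carr[OF that(1)] by (metis d.hom_closed inv_equality inv_inv r_inv_ex)
    then have "(d ^^ n) c = c" for n
      by (induction n) simp_all
    then show ?thesis
      using nil[OF that(1)] by metis
  qed
  show ?thesis
  proof (rule bij_betwI')
    fix x y assume x: "x \<in> C" and y: "y \<in> C"
    have "?s (x \<otimes> inv y) = ?s x \<otimes> inv (?s y)"
      using s.hom_mult[OF carr[OF x] inv_closed[OF carr[OF y]]] s.hom_inv[OF carr[OF y]]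
      by (simp only:)
    then have "?s x = ?s y \<Longrightarrow> x \<otimes> inv y = \<one>"
      using x y C s_kernel carr by (simp add: subgroup.m_closed subgroup.m_inv_closed)
    then show "(?s x = ?s y) = (x = y)"
      using carr[OF x] carr[OF y] by (metis inv_equality inv_inv inv_closed)
  qed (use s_closed one_minus_nilpotent_surj[OF d C dC] nil in blast)+
qed

locale internal_direct_sum = comm_group G + group_disjoint_sum G A B
  for G (structure) and A B +
  assumes disjoint: "A \<inter> B = {\<one>}"
    and span: "A <#> B = carrier G"
begin

definition proj :: "'a \<Rightarrow> 'a" where
  "proj g = (THE a. a \<in> A \<and> (\<exists>b\<in>B. g = a \<otimes> b))"

definition coproj :: "'a \<Rightarrow> 'a" where
  "coproj g = inv (proj g) \<otimes> g"

lemma decomposition_unique: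
  assumes "a \<in> A" "b \<in> B" "a' \<in> A" "b' \<in> B" "a \<otimes> b = a' \<otimes> b'"
  shows "a = a'"
  using cancel disjoint assms by blast

lemma proj_eq:
  assumes "a \<in> A" "b \<in> B"
  shows "proj (a \<otimes> b) = a"
  unfolding proj_def using assms decomposition_unique by blast

lemma decomposition_exists:
  assumes "g \<in> carrier G"
  obtains a b where "a \<in> A" "b \<in> B" "g = a \<otimes> b"
  using assms span unfolding set_mult_def by blast

lemma proj_in:
  assumes "g \<in> carrier G"
  shows "proj g \<in> A"
  using assms proj_eq by (metis decomposition_exists)

lemma proj_fixes:
  assumes "a \<in> A"
  shows "proj a = a"
  using proj_eq[OF assms BG.one_closed] assms by simp

lemma proj_mult_coproj:
  assumes "g \<in> carrier G"
  shows "proj g \<otimes> coproj g = g"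
  using assms proj_in unfolding coproj_def by (simp flip: m_assoc)

lemma coproj_in:
  assumes "g \<in> carrier G"
  shows "coproj g \<in> B"
proof -
  obtain a b where "a \<in> A" "b \<in> B" "g = a \<otimes> b"
    using decomposition_exists[OF assms] .
  then show ?thesis
    unfolding coproj_def by (simp add: proj_eq flip: m_assoc)
qed

lemma proj_hom: "proj \<in> hom G G"
proof (rule homI)
  fix x y assume x: "x \<in> carrier G" and y: "y \<in> carrier G"
  have carr: "proj x \<in> carrier G" "proj y \<in> carrier G" "coproj x \<in> carrier G" "coproj y \<in> carrier G"
    using x y proj_in coproj_in by auto
  have "x \<otimes> y = (proj x \<otimes> coproj x) \<otimes> (proj y \<otimes> coproj y)"
    using x y by (simp add: proj_mult_coproj)
  also have "\<dots> = (proj x \<otimes> proj y) \<otimes> (coproj x \<otimes> coproj y)"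
    using carr by (simp add: m_ac)
  finally show "proj (x \<otimes> y) = proj x \<otimes> proj y"
    using x y proj_in coproj_in proj_eq by simp
qed (use proj_in AG.mem_carrier in blast)

lemma proj_group_hom: "group_hom G G proj"
  using proj_hom by (simp add: group_hom_def group_hom_axioms_def is_group)

lemma coproj_hom: "coproj \<in> hom G G"
  unfolding coproj_def
  using hom_mult_pointwise[OF hom_inv_pointwise[OF proj_hom]] by (simp add: homI)

lemma proj_eq_one_iff:
  assumes "g \<in> carrier G"
  shows "proj g = \<one> \<longleftrightarrow> g \<in> B"
  using assms proj_eq[OF AG.one_closed] proj_mult_coproj coproj_in BG.mem_carrier
  by (metis l_one)

end

lemma (in comm_group) direct_summandE:
  assumes "direct_summand A G"
  obtains B where "internal_direct_sum G A B"
  using assms unfolding direct_summand_def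
  by (metis internal_direct_sum.intro internal_direct_sum_axioms.intro group_disjoint_sum.intro
      comm_group_axioms is_group)

context internal_direct_sum
begin

lemma r_coset_mult_eq_self:
  assumes K: "subgroup K G" "K \<subseteq> A" and a: "a \<in> A" and b: "b \<in> B"
    and eq: "K #> (a \<otimes> b) = K"
  shows "b = \<one>" "a \<in> K"
proof -
  have a_carr: "a \<in> carrier G" and b_carr: "b \<in> carrier G"
    using AG.mem_carrier[OF a] BG.mem_carrier[OF b] .
  have "a \<otimes> b \<in> K"
    using coset_join1[OF eq m_closed[OF a_carr b_carr] K(1)] .
  moreover have "b = inv a \<otimes> (a \<otimes> b)"
    using a_carr b_carr by (simp flip: m_assoc)
  ultimately have "b \<in> A"
    using K(2) AG.m_closed[OF AG.m_inv_closed[OF a]] by (metis subsetD)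
  then show "b = \<one>"
    using b disjoint by blast
  then show "a \<in> K"
    using \<open>a \<otimes> b \<in> K\<close> a_carr by simp
qed

lemma inj_hom_FactGroup_extend:
  assumes K: "subgroup K G" "K \<subseteq> A"
    and \<phi>: "\<phi> \<in> hom (G\<lparr>carrier := A\<rparr>) (G\<lparr>carrier := A\<rparr> Mod K)" "inj_on \<phi> A"
  shows "\<exists>f. f \<in> hom G (G Mod K) \<and> inj_on f (carrier G)"
proof -
  let ?A = "G\<lparr>carrier := A\<rparr>"
  interpret K: normal K G
    using subgroup_imp_normal[OF K(1)] .
  interpret Mod: comm_group "G Mod K"
    using abelian_FactGroup[OF K(1)] .
  interpret A: comm_group ?A
    using comm_group_carrier_update[OF AG.subgroup_axioms] .
  have "comm_group (?A Mod K)"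
    using A.abelian_FactGroup subgroup_incl[OF K(1) AG.subgroup_axioms K(2)] by blast
  then have \<phi>_one: "\<phi> \<one> = K"
    using hom_one[OF \<phi>(1) A.is_group] by (simp add: comm_group.axioms(2) FactGroup_def)
  have \<phi>_coset: "\<exists>a'\<in>A. \<phi> a = K #> a'" if "a \<in> A" for a
    using hom_in_carrier[OF \<phi>(1)] that unfolding FactGroup_def RCOSETS_def r_coset_def by auto
  have proj_hom_A: "proj \<in> hom G ?A"
    using proj_hom proj_in by (auto simp: hom_def)
  have \<phi>_proj: "(\<lambda>g. \<phi> (proj g)) \<in> hom G (G Mod K)"
    using Group.hom_compose[OF proj_hom_A subsetD[OF hom_FactGroup_carrier_update \<phi>(1)]]
      AG.subset by (simp add: o_def)
  have coset_coproj: "(\<lambda>g. K #> coproj g) \<in> hom G (G Mod K)"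
    using Group.hom_compose[OF coproj_hom K.r_coset_hom_Mod] by (simp add: o_def)
  define f where "f g = \<phi> (proj g) <#> (K #> coproj g)" for g
  have f_hom: "f \<in> hom G (G Mod K)"
    using Mod.hom_mult_pointwise[OF \<phi>_proj coset_coproj] unfolding f_def
    by (simp add: FactGroup_def)
  then interpret f: group_hom G "G Mod K" f
    by (simp add: group_hom_def group_hom_axioms_def is_group Mod.is_group)
  have "g = \<one>" if g: "g \<in> carrier G" "f g = K" for g
  proof -
    obtain a where a: "a \<in> A" "\<phi> (proj g) = K #> a"
      using \<phi>_coset proj_in[OF g(1)] by blast
    have "K #> (a \<otimes> coproj g) = K"
      using g(2) a K.rcos_sum AG.mem_carrier BG.mem_carrier[OF coproj_in[OF g(1)]]
      unfolding f_def by simp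
    then have "coproj g = \<one>" "a \<in> K"
      using r_coset_mult_eq_self[OF K a(1) coproj_in[OF g(1)]] by auto
    then have "\<phi> (proj g) = \<phi> \<one>"
      using a(2) \<phi>_one subgroup.rcos_const[OF K(1) is_group] by simp
    then have "proj g = \<one>"
      using inj_onD[OF \<phi>(2)] proj_in[OF g(1)] AG.one_closed by blast
    then show ?thesis
      using proj_mult_coproj[OF g(1)] \<open>coproj g = \<one>\<close> by simp
  qed
  then have "kernel G (G Mod K) f = {\<one>}"
    unfolding kernel_def FactGroup_def by auto
  then show ?thesis
    using f_hom f.inj_iff_trivial_ker by blast
qed

lemma essential_in_proj_image:
  assumes "subgroup C G" "subgroup K G" "K \<subseteq> A" "essential_in K C G"
  shows "essential_in K (proj ` C) (G\<lparr>carrier := A\<rparr>)"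
proof -
  have "proj ` C \<subseteq> A"
    using proj_in subgroup.mem_carrier[OF assms(1)] by blast
  moreover have "essential_in K (proj ` C) G"
    using essential_in_hom_image[OF proj_hom assms(1,2) _ assms(4)] proj_fixes assms(3) by blast
  ultimately show ?thesis
    using essential_in_carrier_update_iff[OF AG.subgroup_axioms] by blast
qed

lemma bij_betw_proj_proj:
  assumes CD: "internal_direct_sum G C D"
    and K: "subgroup K G" "K \<subseteq> A" and ess: "essential_in K C G"
  shows "bij_betw (\<lambda>c. internal_direct_sum.proj G C D (proj c)) C C"
proof -
  interpret CD: internal_direct_sum G C D
    by (fact CD)
  define d where "d = CD.proj \<circ> coproj"
  have d_hom: "d \<in> hom G G"
    unfolding d_def using coproj_hom CD.proj_hom by (rule Group.hom_compose)
  have dC: "d ` C \<subseteq> C"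
    unfolding d_def using CD.proj_in coproj_in BG.mem_carrier by auto
  have dK: "d k = \<one>" if "k \<in> K" for k
    using that K(2) proj_fixes CD.proj_eq_one_iff coproj_in BG.mem_carrier CD.BG.one_closed
    unfolding d_def coproj_def by (simp add: AG.mem_carrier subsetD)
  interpret pC: group_hom G G CD.proj
    by (rule CD.proj_group_hom)
  have "CD.proj (proj c) = c \<otimes> inv (d c)" if "c \<in> C" for c
  proof -
    have c: "c \<in> carrier G"
      using CD.AG.mem_carrier[OF that] .
    have "proj c = c \<otimes> inv (coproj c)"
      using proj_mult_coproj[OF c] c proj_in coproj_in AG.mem_carrier BG.mem_carrier
      by (metis inv_solve_right)
    then show ?thesis
      using c CD.proj_fixes[OF that] coproj_in BG.mem_carrier unfolding d_def by simp
  qed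
  then show ?thesis
    using bij_betw_one_minus_locally_nilpotent[OF d_hom CD.AG.subgroup_axioms dC]
      locally_nilpotent_if_kills_essential[OF d_hom CD.AG.subgroup_axioms dC K(1) dK ess]
      bij_betw_cong[of C "\<lambda>c. CD.proj (proj c)" "\<lambda>c. c \<otimes> inv (d c)" C]
    by simp
qed

lemma proj_image_inter_complement:
  assumes CD: "internal_direct_sum G C D"
    and bij: "bij_betw (\<lambda>c. internal_direct_sum.proj G C D (proj c)) C C"
  shows "proj ` C \<inter> (A \<inter> D) = {\<one>}"
proof
  interpret CD: internal_direct_sum G C D
    by (fact CD)
  show "proj ` C \<inter> (A \<inter> D) \<subseteq> {\<one>}"
  proof
    fix x assume "x \<in> proj ` C \<inter> (A \<inter> D)"
    then obtain c where c: "c \<in> C" "x = proj c" "proj c \<in> D"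
      by blast
    have "proj c \<in> carrier G"
      using AG.mem_carrier[OF proj_in[OF CD.AG.mem_carrier[OF c(1)]]] .
    then have "CD.proj (proj c) = \<one>"
      using CD.proj_eq_one_iff c(3) by blast
    also have "\<one> = CD.proj (proj \<one>)"
      using proj_fixes[OF AG.one_closed] CD.proj_fixes[OF CD.AG.one_closed] by simp
    finally have "CD.proj (proj c) = CD.proj (proj \<one>)" .
    then have "c = \<one>"
      using inj_onD[OF bij_betw_imp_inj_on[OF bij]] c(1) CD.AG.one_closed by blast
    then show "x \<in> {\<one>}"
      using c(2) proj_fixes AG.one_closed by simp
  qed
  show "{\<one>} \<subseteq> proj ` C \<inter> (A \<inter> D)"
    using proj_fixes[OF AG.one_closed] CD.AG.one_closed AG.one_closed CD.BG.one_closed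
    by (metis IntI empty_subsetI image_eqI insert_subset)
qed

lemma proj_image_mult_complement:
  assumes CD: "internal_direct_sum G C D"
    and bij: "bij_betw (\<lambda>c. internal_direct_sum.proj G C D (proj c)) C C"
  shows "proj ` C <#> (A \<inter> D) = A"
proof
  interpret CD: internal_direct_sum G C D
    by (fact CD)
  interpret pC: group_hom G G CD.proj
    by (rule CD.proj_group_hom)
  show "proj ` C <#> (A \<inter> D) \<subseteq> A"
    unfolding set_mult_def using proj_in CD.AG.mem_carrier AG.m_closed by blast
  show "A \<subseteq> proj ` C <#> (A \<inter> D)"
  proof
    fix a assume a: "a \<in> A"
    have a_carr: "a \<in> carrier G"
      using AG.mem_carrier[OF a] .
    have "CD.proj a \<in> (\<lambda>c. CD.proj (proj c)) ` C"
      using bij_betw_imp_surj_on[OF bij] CD.proj_in[OF a_carr] by simp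
    then obtain c where c: "c \<in> C" "CD.proj a = CD.proj (proj c)"
      by auto
    have pc: "proj c \<in> A" "proj c \<in> carrier G"
      using proj_in[OF CD.AG.mem_carrier[OF c(1)]] AG.mem_carrier by auto
    define w where "w = inv (proj c) \<otimes> a"
    have "w \<in> A"
      unfolding w_def using pc(1) a by (simp add: AG.m_closed AG.m_inv_closed)
    moreover have "CD.proj w = \<one>"
      unfolding w_def using c(2) a_carr pc(2) by simp
    ultimately have "w \<in> A \<inter> D"
      using CD.proj_eq_one_iff AG.mem_carrier by blast
    moreover have "a = proj c \<otimes> w"
      unfolding w_def using a_carr pc(2) by (simp flip: m_assoc)
    ultimately show "a \<in> proj ` C <#> (A \<inter> D)"
      unfolding set_mult_def using c(1) by blast
  qed
qed

lemma direct_summand_proj_image: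
  assumes CD: "internal_direct_sum G C D"
    and bij: "bij_betw (\<lambda>c. internal_direct_sum.proj G C D (proj c)) C C"
  shows "direct_summand (proj ` C) (G\<lparr>carrier := A\<rparr>)"
proof (rule direct_summand_carrier_update[OF AG.subgroup_axioms])
  show "subgroup (proj ` C) G"
    using group_hom.subgroup_img_is_subgroup[OF proj_group_hom]
      internal_direct_sum.axioms(2)[OF CD] group_disjoint_sum.axioms(2) by blast
  show "subgroup (A \<inter> D) G"
    using subgroups_Inter_pair[OF AG.subgroup_axioms] internal_direct_sum.axioms(2)[OF CD]
      group_disjoint_sum.axioms(3) by blast
qed (use proj_image_inter_complement[OF CD bij] proj_image_mult_complement[OF CD bij] in auto)

end

theorem theorem2p5:
  fixes G :: "('a, 'b) monoid_scheme" and A :: "'a set"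
  assumes "comm_group G"
    and "semi_generalized_bassian G"
    and "direct_summand A G"
  shows "semi_generalized_bassian (G\<lparr>carrier := A\<rparr>)"
proof -
  interpret comm_group G
    by (fact assms(1))
  obtain B where "internal_direct_sum G A B"
    using direct_summandE[OF assms(3)] .
  then interpret AB: internal_direct_sum G A B .
  show ?thesis
    unfolding semi_generalized_bassian_def
  proof (intro conjI allI impI)
    show "comm_group (G\<lparr>carrier := A\<rparr>)"
      using comm_group_carrier_update[OF AB.AG.subgroup_axioms] .
    fix K assume K: "subgroup K (G\<lparr>carrier := A\<rparr>)"
      and "\<exists>\<phi>. \<phi> \<in> hom (G\<lparr>carrier := A\<rparr>) (G\<lparr>carrier := A\<rparr> Mod K) \<and> inj_on \<phi> (carrier (G\<lparr>carrier := A\<rparr>))"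
    then obtain \<phi> where "\<phi> \<in> hom (G\<lparr>carrier := A\<rparr>) (G\<lparr>carrier := A\<rparr> Mod K)" "inj_on \<phi> A"
      by auto
    moreover have "subgroup K G" "K \<subseteq> A"
      using K subgroup_carrier_update_iff[OF AB.AG.subgroup_axioms] by auto
    ultimately obtain f where "f \<in> hom G (G Mod K)" "inj_on f (carrier G)"
      using AB.inj_hom_FactGroup_extend by blast
    then obtain C where "direct_summand C G" "essential_in K C G"
      using assms(2) \<open>subgroup K G\<close> unfolding semi_generalized_bassian_def by blast
    moreover obtain D where "internal_direct_sum G C D"
      using direct_summandE[OF \<open>direct_summand C G\<close>] .
    ultimately show "\<exists>E. direct_summand E (G\<lparr>carrier := A\<rparr>) \<and> essential_in K E (G\<lparr>carrier := A\<rparr>)"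
      using AB.direct_summand_proj_image AB.bij_betw_proj_proj AB.essential_in_proj_image
        \<open>subgroup K G\<close> \<open>K \<subseteq> A\<close> direct_summand_def by blast
  qed
qed

end
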